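(* Let $0\to V\to\widehat A\xrightarrow{j}A\to0$ be an abelian extension of a Com-PreLie algebra $A$ by a representation $(V,\mu,l,r)$ inducing that representation, let $s$ be a linear section of $j$, and let $(\phi,\psi)$ be the 2-cocycle $\phi(x,y)=s(x)\ast_{\widehat A}s(y)-s(x\ast y)$, $\psi(x,y)=s(x)\bullet_{\widehat A}s(y)-s(x\bullet y)$. A pair $(\beta,\alpha)\in\mathrm{Aut}(V)\times\mathrm{Aut}(A)$ is inducible if and only if $(\beta,\alpha)\in\mathcal C$ and the 2-cocycles $(\phi,\psi)^{(\beta,\alpha)}$ and $(\phi,\psi)$ are cohomologous.
   Context: All vector spaces are over a field of characteristic $0$. A Com-PreLie algebra is a triple $(A,\ast,\bullet)$ where $A$ is a vector space, $\ast$ is a commutative associative bilinear product on $A$, and $\bullet$ is a bilinear product on $A$ satisfying the left pre-Lie identity $(x\bullet y)\bullet z-x\bullet(y\bullet z)=(y\bullet x)\bullet z-y\bullet(x\bullet z)$ and the compatibility $x\bullet(y\ast z)=(x\bullet y)\ast z+y\ast(x\bullet z)$ for all $x,y,z\in A$. A homomorphism of Com-PreLie algebras is a linear map preserving both products. A representation of $A$ is a quadruple $(V,\mu,l,r)$ with $V$ a vector space and $\mu,l,r:A\to\mathrm{End}(V)$ linear maps satisfying, for all $x,y\in A$: $\mu(x\ast y)=\mu(x)\mu(y)$; $l(x\bullet y)-l(x)l(y)=l(y\bullet x)-l(y)l(x)$; $r(y)l(x)-l(x)r(y)=r(y)r(x)-r(x\bullet y)$; $l(x)\mu(y)=\mu(x\bullet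 y)+\mu(y)l(x)$; $r(x\ast y)=\mu(y)r(x)+\mu(x)r(y)$. An abelian extension of $A$ by $V$ is a Com-PreLie algebra $(\widehat A,\ast_{\widehat A},\bullet_{\widehat A})$ with a short exact sequence $0\to V\xrightarrow{i}\widehat A\xrightarrow{j}A\to0$ of Com-PreLie algebra homomorphisms, $V$ carrying the zero products; $V$ is identified with $i(V)=\ker j$. It induces the given representation if for any linear section $s$ of $j$ ($j\circ s=\mathrm{id}_A$): $\mu(x)u=s(x)\ast_{\widehat A}u$, $l(x)u=s(x)\bullet_{\widehat A}u$, $r(x)u=u\bullet_{\widehat A}s(x)$. Two pairs $(\phi,\psi),(\phi',\psi')$ of bilinear maps $A\times A\to V$ are cohomologous if there is a linear $f:A\to V$ with $\phi(x,y)-\phi'(x,y)=\mu(x)f(y)-f(x\ast y)+\mu(y)f(x)$ and $\psi(x,y)-\psi'(x,y)=l(x)f(y)-f(x\bullet y)+r(y)f(x)$ for all $x,y\in A$. $\mathrm{Aut}(A)$ is the group of Com-PreLie algebra automorphisms of $A$; $\mathrm{Aut}(V)$ is the group of linear automorphisms of $V$; $\mathrm{Aut}_V(\widehat A)$ is the group of Com-PreLie algebra automorphisms $\gamma$ of $\widehat A$ with $\gamma(V)=V$. For $\gamma\in\mathrm{Aut}_V(\widehat A)$ put $\overline\gamma=j\gamma s\in\mathrm{Aut}(A)$ and $\tau(\gamma)=(\gamma|_V,\overline\gamma)$. A pair $(\beta,\alpha)\in\mathrm{Aut}(V)\times\mathrm{Aut}(A)$ is inducible if $(\beta,\alpha)=\tau(\gamma)$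 for some $\gamma\in\mathrm{Aut}_V(\widehat A)$. $\mathcal C$ is the set of pairs $(\beta,\alpha)\in\mathrm{Aut}(V)\times\mathrm{Aut}(A)$ with $\beta(\mu(x)u)=\mu(\alpha(x))\beta(u)$, $\beta(l(x)u)=l(\alpha(x))\beta(u)$, $\beta(r(x)u)=r(\alpha(x))\beta(u)$ for all $x\in A,u\in V$. For such a pair, $(\phi,\psi)^{(\beta,\alpha)}$ is the pair $(x,y)\mapsto\big(\beta\phi(\alpha^{-1}x,\alpha^{-1}y),\ \beta\psi(\alpha^{-1}x,\alpha^{-1}y)\big)$. *)

theory Defs
  imports Complex_Main
begin

text \<open>Vector spaces over a field 'k of characteristic 0 are modelled as types of class
ab_group_add together with a scalar multiplication satisfying the vector_space locale.\<close>

definition bilinear_map ::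
  "('k::field \<Rightarrow> 'a::ab_group_add \<Rightarrow> 'a) \<Rightarrow> ('k \<Rightarrow> 'b::ab_group_add \<Rightarrow> 'b)
   \<Rightarrow> ('a \<Rightarrow> 'a \<Rightarrow> 'b) \<Rightarrow> bool" where
  "bilinear_map sA sB f \<longleftrightarrow>
     (\<forall>x. Vector_Spaces.linear sA sB (f x)) \<and> (\<forall>y. Vector_Spaces.linear sA sB (\<lambda>x. f x y))"

definition com_prelie ::
  "('k::field \<Rightarrow> 'a::ab_group_add \<Rightarrow> 'a) \<Rightarrow> ('a \<Rightarrow> 'a \<Rightarrow> 'a) \<Rightarrow> ('a \<Rightarrow> 'a \<Rightarrow> 'a) \<Rightarrow> bool" where
  "com_prelie sA mul dot \<longleftrightarrow>
     vector_space sA \<and> bilinear_map sA sA mul \<and> bilinear_map sA sA dot \<and>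
     (\<forall>x y. mul x y = mul y x) \<and>
     (\<forall>x y z. mul (mul x y) z = mul x (mul y z)) \<and>
     (\<forall>x y z. dot (dot x y) z - dot x (dot y z) = dot (dot y x) z - dot y (dot x z)) \<and>
     (\<forall>x y z. dot x (mul y z) = mul (dot x y) z + mul y (dot x z))"

definition com_prelie_hom ::
  "('k::field \<Rightarrow> 'a::ab_group_add \<Rightarrow> 'a) \<Rightarrow> ('a \<Rightarrow> 'a \<Rightarrow> 'a) \<Rightarrow> ('a \<Rightarrow> 'a \<Rightarrow> 'a) \<Rightarrow>
   ('k \<Rightarrow> 'b::ab_group_add \<Rightarrow> 'b) \<Rightarrow> ('b \<Rightarrow> 'b \<Rightarrow> 'b) \<Rightarrow> ('b \<Rightarrow> 'b \<Rightarrow> 'b) \<Rightarrow>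
   ('a \<Rightarrow> 'b) \<Rightarrow> bool" where
  "com_prelie_hom sA mulA dotA sB mulB dotB f \<longleftrightarrow>
     Vector_Spaces.linear sA sB f \<and>
     (\<forall>x y. f (mulA x y) = mulB (f x) (f y)) \<and>
     (\<forall>x y. f (dotA x y) = dotB (f x) (f y))"

definition com_prelie_rep ::
  "('k::field \<Rightarrow> 'a::ab_group_add \<Rightarrow> 'a) \<Rightarrow> ('a \<Rightarrow> 'a \<Rightarrow> 'a) \<Rightarrow> ('a \<Rightarrow> 'a \<Rightarrow> 'a) \<Rightarrow>
   ('k \<Rightarrow> 'v::ab_group_add \<Rightarrow> 'v) \<Rightarrow>
   ('a \<Rightarrow> 'v \<Rightarrow> 'v) \<Rightarrow> ('a \<Rightarrow> 'v \<Rightarrow> 'v) \<Rightarrow> ('a \<Rightarrow> 'v \<Rightarrow> 'v) \<Rightarrow> bool" where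
  "com_prelie_rep sA mul dot sV \<mu> l r \<longleftrightarrow>
     vector_space sV \<and>
     (\<forall>x. Vector_Spaces.linear sV sV (\<mu> x) \<and> Vector_Spaces.linear sV sV (l x)
          \<and> Vector_Spaces.linear sV sV (r x)) \<and>
     (\<forall>u. Vector_Spaces.linear sA sV (\<lambda>x. \<mu> x u) \<and> Vector_Spaces.linear sA sV (\<lambda>x. l x u)
          \<and> Vector_Spaces.linear sA sV (\<lambda>x. r x u)) \<and>
     (\<forall>x y u. \<mu> (mul x y) u = \<mu> x (\<mu> y u)) \<and>
     (\<forall>x y u. l (dot x y) u - l x (l y u) = l (dot y x) u - l y (l x u)) \<and>
     (\<forall>x y u. r y (l x u) - l x (r y u) = r y (r x u) - r (dot x y) u) \<and>
     (\<forall>x y u. l x (\<mu> y u) = \<mu> (dot x y) u + \<mu> y (l x u)) \<and>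
     (\<forall>x y u. r (mul x y) u = \<mu> y (r x u) + \<mu> x (r y u))"

definition abelian_extension ::
  "('k::field \<Rightarrow> 'a::ab_group_add \<Rightarrow> 'a) \<Rightarrow> ('a \<Rightarrow> 'a \<Rightarrow> 'a) \<Rightarrow> ('a \<Rightarrow> 'a \<Rightarrow> 'a) \<Rightarrow>
   ('k \<Rightarrow> 'v::ab_group_add \<Rightarrow> 'v) \<Rightarrow>
   ('k \<Rightarrow> 'h::ab_group_add \<Rightarrow> 'h) \<Rightarrow> ('h \<Rightarrow> 'h \<Rightarrow> 'h) \<Rightarrow> ('h \<Rightarrow> 'h \<Rightarrow> 'h) \<Rightarrow>
   ('v \<Rightarrow> 'h) \<Rightarrow> ('h \<Rightarrow> 'a) \<Rightarrow> bool" where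
  "abelian_extension sA mul dot sV sH mulH dotH i j \<longleftrightarrow>
     com_prelie sA mul dot \<and> com_prelie sH mulH dotH \<and> vector_space sV \<and>
     com_prelie_hom sV (\<lambda>_ _. 0) (\<lambda>_ _. 0) sH mulH dotH i \<and>
     com_prelie_hom sH mulH dotH sA mul dot j \<and>
     inj i \<and> surj j \<and> range i = {h. j h = 0}"

definition linear_section ::
  "('k::field \<Rightarrow> 'a::ab_group_add \<Rightarrow> 'a) \<Rightarrow> ('k \<Rightarrow> 'h::ab_group_add \<Rightarrow> 'h) \<Rightarrow>
   ('h \<Rightarrow> 'a) \<Rightarrow> ('a \<Rightarrow> 'h) \<Rightarrow> bool" where
  "linear_section sA sH j s \<longleftrightarrow> Vector_Spaces.linear sA sH s \<and> (\<forall>x. j (s x) = x)"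

text \<open>The extension induces the representation (V identified with i(V)).\<close>
definition induces_rep ::
  "('k::field \<Rightarrow> 'a::ab_group_add \<Rightarrow> 'a) \<Rightarrow> ('k \<Rightarrow> 'h::ab_group_add \<Rightarrow> 'h) \<Rightarrow>
   ('h \<Rightarrow> 'h \<Rightarrow> 'h) \<Rightarrow> ('h \<Rightarrow> 'h \<Rightarrow> 'h) \<Rightarrow> ('v::ab_group_add \<Rightarrow> 'h) \<Rightarrow> ('h \<Rightarrow> 'a) \<Rightarrow>
   ('a \<Rightarrow> 'v \<Rightarrow> 'v) \<Rightarrow> ('a \<Rightarrow> 'v \<Rightarrow> 'v) \<Rightarrow> ('a \<Rightarrow> 'v \<Rightarrow> 'v) \<Rightarrow> bool" where
  "induces_rep sA sH mulH dotH i j \<mu> l r \<longleftrightarrow>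
     (\<forall>s. linear_section sA sH j s \<longrightarrow>
        (\<forall>x u. i (\<mu> x u) = mulH (s x) (i u) \<and> i (l x u) = dotH (s x) (i u)
               \<and> i (r x u) = dotH (i u) (s x)))"

definition com_prelie_aut ::
  "('k::field \<Rightarrow> 'a::ab_group_add \<Rightarrow> 'a) \<Rightarrow> ('a \<Rightarrow> 'a \<Rightarrow> 'a) \<Rightarrow> ('a \<Rightarrow> 'a \<Rightarrow> 'a) \<Rightarrow>
   ('a \<Rightarrow> 'a) \<Rightarrow> bool" where
  "com_prelie_aut sA mul dot f \<longleftrightarrow> com_prelie_hom sA mul dot sA mul dot f \<and> bij f"

definition linear_aut :: "('k::field \<Rightarrow> 'v::ab_group_add \<Rightarrow> 'v) \<Rightarrow> ('v \<Rightarrow> 'v) \<Rightarrow> bool" where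
  "linear_aut sV f \<longleftrightarrow> Vector_Spaces.linear sV sV f \<and> bij f"

definition aut_V ::
  "('k::field \<Rightarrow> 'h::ab_group_add \<Rightarrow> 'h) \<Rightarrow> ('h \<Rightarrow> 'h \<Rightarrow> 'h) \<Rightarrow> ('h \<Rightarrow> 'h \<Rightarrow> 'h) \<Rightarrow>
   ('v \<Rightarrow> 'h) \<Rightarrow> ('h \<Rightarrow> 'h) \<Rightarrow> bool" where
  "aut_V sH mulH dotH i g \<longleftrightarrow> com_prelie_aut sH mulH dotH g \<and> g ` range i = range i"

text \<open>tau(gamma) = (gamma restricted to V, j o gamma o s).\<close>
definition inducible ::
  "('k::field \<Rightarrow> 'h::ab_group_add \<Rightarrow> 'h) \<Rightarrow> ('h \<Rightarrow> 'h \<Rightarrow> 'h) \<Rightarrow> ('h \<Rightarrow> 'h \<Rightarrow> 'h) \<Rightarrow>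
   ('v::ab_group_add \<Rightarrow> 'h) \<Rightarrow> ('h \<Rightarrow> 'a::ab_group_add) \<Rightarrow> ('a \<Rightarrow> 'h) \<Rightarrow>
   ('v \<Rightarrow> 'v) \<Rightarrow> ('a \<Rightarrow> 'a) \<Rightarrow> bool" where
  "inducible sH mulH dotH i j s \<beta> \<alpha> \<longleftrightarrow>
     (\<exists>g. aut_V sH mulH dotH i g \<and> (\<forall>u. g (i u) = i (\<beta> u)) \<and> (\<forall>x. j (g (s x)) = \<alpha> x))"

definition compat_pairs ::
  "('a \<Rightarrow> 'v \<Rightarrow> 'v) \<Rightarrow> ('a \<Rightarrow> 'v \<Rightarrow> 'v) \<Rightarrow> ('a \<Rightarrow> 'v \<Rightarrow> 'v) \<Rightarrow>
   ('v \<Rightarrow> 'v) \<Rightarrow> ('a \<Rightarrow> 'a) \<Rightarrow> bool" where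
  "compat_pairs \<mu> l r \<beta> \<alpha> \<longleftrightarrow>
     (\<forall>x u. \<beta> (\<mu> x u) = \<mu> (\<alpha> x) (\<beta> u) \<and> \<beta> (l x u) = l (\<alpha> x) (\<beta> u)
            \<and> \<beta> (r x u) = r (\<alpha> x) (\<beta> u))"

definition cohomologous ::
  "('k::field \<Rightarrow> 'a::ab_group_add \<Rightarrow> 'a) \<Rightarrow> ('a \<Rightarrow> 'a \<Rightarrow> 'a) \<Rightarrow> ('a \<Rightarrow> 'a \<Rightarrow> 'a) \<Rightarrow>
   ('k \<Rightarrow> 'v::ab_group_add \<Rightarrow> 'v) \<Rightarrow>
   ('a \<Rightarrow> 'v \<Rightarrow> 'v) \<Rightarrow> ('a \<Rightarrow> 'v \<Rightarrow> 'v) \<Rightarrow> ('a \<Rightarrow> 'v \<Rightarrow> 'v) \<Rightarrow>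
   ('a \<Rightarrow> 'a \<Rightarrow> 'v) \<Rightarrow> ('a \<Rightarrow> 'a \<Rightarrow> 'v) \<Rightarrow> ('a \<Rightarrow> 'a \<Rightarrow> 'v) \<Rightarrow> ('a \<Rightarrow> 'a \<Rightarrow> 'v) \<Rightarrow> bool" where
  "cohomologous sA mul dot sV \<mu> l r \<phi> \<psi> \<phi>' \<psi>' \<longleftrightarrow>
     (\<exists>f. Vector_Spaces.linear sA sV f \<and>
       (\<forall>x y. \<phi> x y - \<phi>' x y = \<mu> x (f y) - f (mul x y) + \<mu> y (f x)) \<and>
       (\<forall>x y. \<psi> x y - \<psi>' x y = l x (f y) - f (dot x y) + r y (f x)))"

definition cocycle_phi ::
  "('h::ab_group_add \<Rightarrow> 'h \<Rightarrow> 'h) \<Rightarrow> ('a \<Rightarrow> 'a \<Rightarrow> 'a) \<Rightarrow> ('v \<Rightarrow> 'h) \<Rightarrow> ('a \<Rightarrow> 'h) \<Rightarrow>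
   'a \<Rightarrow> 'a \<Rightarrow> 'v" where
  "cocycle_phi mulH mul i s x y = inv i (mulH (s x) (s y) - s (mul x y))"

definition cocycle_psi ::
  "('h::ab_group_add \<Rightarrow> 'h \<Rightarrow> 'h) \<Rightarrow> ('a \<Rightarrow> 'a \<Rightarrow> 'a) \<Rightarrow> ('v \<Rightarrow> 'h) \<Rightarrow> ('a \<Rightarrow> 'h) \<Rightarrow>
   'a \<Rightarrow> 'a \<Rightarrow> 'v" where
  "cocycle_psi dotH dot i s x y = inv i (dotH (s x) (s y) - s (dot x y))"

definition twist :: "('v \<Rightarrow> 'v) \<Rightarrow> ('a \<Rightarrow> 'a) \<Rightarrow> ('a \<Rightarrow> 'a \<Rightarrow> 'v) \<Rightarrow> 'a \<Rightarrow> 'a \<Rightarrow> 'v" where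
  "twist \<beta> \<alpha> \<phi> x y = \<beta> (\<phi> (inv \<alpha> x) (inv \<alpha> y))"

end

theory Submission
  imports Defs
begin

(*
  Write every element of the extension uniquely as s x + i u.  An automorphism \<gamma> with
  \<tau>(\<gamma>) = (\<beta>, \<alpha>) is then forced to be s x + i u \<mapsto> s (\<alpha> x) + i (\<beta> u + \<theta> x) for a linear
  \<theta> : A \<rightarrow> V, and every map of this shape is a linear bijection preserving V.  Expanding both
  products in these coordinates, such a map is a Com-PreLie homomorphism exactly when
  (\<beta>, \<alpha>) is compatible with \<mu>, l, r and
    \<beta> (\<phi> x y) = \<phi> (\<alpha> x) (\<alpha> y) + \<mu> (\<alpha> x) (\<theta> y) + \<mu> (\<alpha> y) (\<theta> x) - \<theta> (x \<ast> y)
  together with its pre-Lie analogue for \<psi>; after the substitution f = \<theta> \<circ> \<alpha>\<inverse> this says that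
  (\<phi>, \<psi>)\<^bsup>(\<beta>,\<alpha>)\<^esup> and (\<phi>, \<psi>) differ by the coboundary of f.
*)

lemma linear_ops:
  assumes "Vector_Spaces.linear s1 s2 f"
  shows "f (x + y) = f x + f y" "f 0 = 0" "f (x - y) = f x - f y" "f (- x) = - f x"
    "f (s1 c x) = s2 c (f x)"
  using module_hom_linearI[OF assms]
  by (simp_all add: module_hom.add module_hom.zero module_hom.diff module_hom.neg module_hom.scale)

lemma bij_linear_imp_inv_linear:
  assumes "Vector_Spaces.linear s1 s2 f" and "bij f"
  shows "Vector_Spaces.linear s2 s1 (inv f)"
  using assms by (metis bij_module_hom_imp_inv_module_hom module_hom_iff_linear)

lemma cohomologous_twist_iff:
  assumes "com_prelie_aut sA mul dot \<alpha>"
  shows "cohomologous sA mul dot sV \<mu> l r (twist \<beta> \<alpha> \<phi>) (twist \<beta> \<alpha> \<psi>) \<phi> \<psi> \<longleftrightarrow>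
    (\<exists>\<theta>. Vector_Spaces.linear sA sV \<theta> \<and>
      (\<forall>a b. \<beta> (\<phi> a b) = \<phi> (\<alpha> a) (\<alpha> b) + \<mu> (\<alpha> a) (\<theta> b) + \<mu> (\<alpha> b) (\<theta> a) - \<theta> (mul a b)) \<and>
      (\<forall>a b. \<beta> (\<psi> a b) = \<psi> (\<alpha> a) (\<alpha> b) + l (\<alpha> a) (\<theta> b) + r (\<alpha> b) (\<theta> a) - \<theta> (dot a b)))"
    (is "?coh \<longleftrightarrow> (\<exists>\<theta>. ?rel \<theta>)")
proof -
  have \<alpha>_lin: "Vector_Spaces.linear sA sA \<alpha>" and "bij \<alpha>"
    and \<alpha>_mul: "\<And>x y. \<alpha> (mul x y) = mul (\<alpha> x) (\<alpha> y)"
    and \<alpha>_dot: "\<And>x y. \<alpha> (dot x y) = dot (\<alpha> x) (\<alpha> y)"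
    using assms unfolding com_prelie_aut_def com_prelie_hom_def by auto
  then have inv_\<alpha>: "\<And>x. inv \<alpha> (\<alpha> x) = x" "\<And>x. \<alpha> (inv \<alpha> x) = x"
    by (simp_all add: bij_is_inj bij_is_surj surj_f_inv_f)
  show ?thesis
  proof
    assume ?coh
    then obtain f where f_lin: "Vector_Spaces.linear sA sV f"
      and f_\<phi>: "\<And>x y. twist \<beta> \<alpha> \<phi> x y - \<phi> x y = \<mu> x (f y) - f (mul x y) + \<mu> y (f x)"
      and f_\<psi>: "\<And>x y. twist \<beta> \<alpha> \<psi> x y - \<psi> x y = l x (f y) - f (dot x y) + r y (f x)"
      unfolding cohomologous_def by blast
    show "\<exists>\<theta>. ?rel \<theta>"
    proof (intro exI[of _ "f \<circ> \<alpha>"] conjI allI)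
      show "Vector_Spaces.linear sA sV (f \<circ> \<alpha>)"
        by (rule Vector_Spaces.linear_compose[OF \<alpha>_lin f_lin])
      fix a b
      show "\<beta> (\<phi> a b) = \<phi> (\<alpha> a) (\<alpha> b) + \<mu> (\<alpha> a) ((f \<circ> \<alpha>) b) + \<mu> (\<alpha> b) ((f \<circ> \<alpha>) a) - (f \<circ> \<alpha>) (mul a b)"
        and "\<beta> (\<psi> a b) = \<psi> (\<alpha> a) (\<alpha> b) + l (\<alpha> a) ((f \<circ> \<alpha>) b) + r (\<alpha> b) ((f \<circ> \<alpha>) a) - (f \<circ> \<alpha>) (dot a b)"
        using f_\<phi>[of "\<alpha> a" "\<alpha> b"] f_\<psi>[of "\<alpha> a" "\<alpha> b"]
        by (simp_all add: twist_def inv_\<alpha> \<alpha>_mul \<alpha>_dot algebra_simps)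
    qed
  next
    assume "\<exists>\<theta>. ?rel \<theta>"
    then obtain \<theta> where "?rel \<theta>" ..
    then have \<theta>_lin: "Vector_Spaces.linear sA sV \<theta>"
      and \<theta>_\<phi>: "\<And>a b. \<beta> (\<phi> a b) - \<phi> (\<alpha> a) (\<alpha> b) = \<mu> (\<alpha> a) (\<theta> b) - \<theta> (mul a b) + \<mu> (\<alpha> b) (\<theta> a)"
      and \<theta>_\<psi>: "\<And>a b. \<beta> (\<psi> a b) - \<psi> (\<alpha> a) (\<alpha> b) = l (\<alpha> a) (\<theta> b) - \<theta> (dot a b) + r (\<alpha> b) (\<theta> a)"
      by (simp_all add: algebra_simps)
    show ?coh
      unfolding cohomologous_def
    proof (intro exI[of _ "\<theta> \<circ> inv \<alpha>"] conjI allI)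
      show "Vector_Spaces.linear sA sV (\<theta> \<circ> inv \<alpha>)"
        by (rule Vector_Spaces.linear_compose[OF bij_linear_imp_inv_linear[OF \<alpha>_lin \<open>bij \<alpha>\<close>] \<theta>_lin])
      fix x y
      have "mul x y = \<alpha> (mul (inv \<alpha> x) (inv \<alpha> y))" "dot x y = \<alpha> (dot (inv \<alpha> x) (inv \<alpha> y))"
        by (simp_all add: \<alpha>_mul \<alpha>_dot inv_\<alpha>)
      then show "twist \<beta> \<alpha> \<phi> x y - \<phi> x y = \<mu> x ((\<theta> \<circ> inv \<alpha>) y) - (\<theta> \<circ> inv \<alpha>) (mul x y) + \<mu> y ((\<theta> \<circ> inv \<alpha>) x)"
        and "twist \<beta> \<alpha> \<psi> x y - \<psi> x y = l x ((\<theta> \<circ> inv \<alpha>) y) - (\<theta> \<circ> inv \<alpha>) (dot x y) + r y ((\<theta> \<circ> inv \<alpha>) x)"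
        using \<theta>_\<phi>[of "inv \<alpha> x" "inv \<alpha> y"] \<theta>_\<psi>[of "inv \<alpha> x" "inv \<alpha> y"]
        by (simp_all add: twist_def inv_\<alpha>)
    qed
  qed
qed

locale abelian_extension_with_section =
  fixes sA :: "'k::field \<Rightarrow> 'a::ab_group_add \<Rightarrow> 'a" and mul dot :: "'a \<Rightarrow> 'a \<Rightarrow> 'a"
    and sV :: "'k \<Rightarrow> 'v::ab_group_add \<Rightarrow> 'v" and \<mu> l r :: "'a \<Rightarrow> 'v \<Rightarrow> 'v"
    and sH :: "'k \<Rightarrow> 'h::ab_group_add \<Rightarrow> 'h" and mulH dotH :: "'h \<Rightarrow> 'h \<Rightarrow> 'h"
    and i :: "'v \<Rightarrow> 'h" and j :: "'h \<Rightarrow> 'a" and s :: "'a \<Rightarrow> 'h"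
  assumes rep: "com_prelie_rep sA mul dot sV \<mu> l r"
    and extension: "abelian_extension sA mul dot sV sH mulH dotH i j"
    and induces: "induces_rep sA sH mulH dotH i j \<mu> l r"
    and linear_section: "linear_section sA sH j s"
begin

abbreviation "\<phi> \<equiv> cocycle_phi mulH mul i s"
abbreviation "\<psi> \<equiv> cocycle_psi dotH dot i s"

lemma linear_i: "Vector_Spaces.linear sV sH i"
  and linear_j: "Vector_Spaces.linear sH sA j"
  and linear_s: "Vector_Spaces.linear sA sH s"
  and j_s [simp]: "j (s x) = x"
  and j_mulH: "j (mulH a b) = mul (j a) (j b)"
  and j_dotH: "j (dotH a b) = dot (j a) (j b)"
  and inj_i: "inj i"
  and range_i: "range i = {h. j h = 0}"
  and mulH_commute: "mulH a b = mulH b a"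
  and vector_space_H: "vector_space sH"
  using extension linear_section
  unfolding abelian_extension_def linear_section_def com_prelie_hom_def com_prelie_def
  by auto

lemma linear_mulH: "Vector_Spaces.linear sH sH (mulH a)" "Vector_Spaces.linear sH sH (\<lambda>a. mulH a b)"
  and linear_dotH: "Vector_Spaces.linear sH sH (dotH a)" "Vector_Spaces.linear sH sH (\<lambda>a. dotH a b)"
  using extension unfolding abelian_extension_def com_prelie_def bilinear_map_def by auto

lemma linear_action: "Vector_Spaces.linear sV sV (\<mu> x)" "Vector_Spaces.linear sV sV (l x)"
    "Vector_Spaces.linear sV sV (r x)"
  using rep unfolding com_prelie_rep_def by auto

lemma i_mulH_i [simp]: "mulH (i u) (i v) = 0"
  and i_dotH_i [simp]: "dotH (i u) (i v) = 0"
  using extension linear_ops(2)[OF linear_i]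
  unfolding abelian_extension_def com_prelie_hom_def by metis+

lemma s_mulH_i [simp]: "mulH (s x) (i u) = i (\<mu> x u)"
  and i_mulH_s [simp]: "mulH (i u) (s x) = i (\<mu> x u)"
  and s_dotH_i [simp]: "dotH (s x) (i u) = i (l x u)"
  and i_dotH_s [simp]: "dotH (i u) (s x) = i (r x u)"
  using induces linear_section mulH_commute unfolding induces_rep_def by metis+

lemma j_i [simp]: "j (i u) = 0"
  using range_i by auto

lemma i_inv_i: "j h = 0 \<Longrightarrow> i (inv i h) = h"
  by (rule f_inv_into_f) (simp add: range_i)

lemma i_eq_iff [simp]: "i u = i v \<longleftrightarrow> u = v"
  using inj_i by (auto dest: injD)

lemma i_phi: "i (\<phi> x y) = mulH (s x) (s y) - s (mul x y)"
  unfolding cocycle_phi_def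
  by (rule i_inv_i) (simp add: linear_ops[OF linear_j] j_mulH)

lemma i_psi: "i (\<psi> x y) = dotH (s x) (s y) - s (dot x y)"
  unfolding cocycle_psi_def
  by (rule i_inv_i) (simp add: linear_ops[OF linear_j] j_dotH)

definition vpart :: "'h \<Rightarrow> 'v" where
  "vpart h = inv i (h - s (j h))"

lemma i_vpart: "i (vpart h) = h - s (j h)"
  unfolding vpart_def by (rule i_inv_i) (simp add: linear_ops[OF linear_j])

lemma decompose: "s (j h) + i (vpart h) = h"
  by (simp add: i_vpart)

lemma j_s_plus_i [simp]: "j (s x + i u) = x"
  by (simp add: linear_ops[OF linear_j])

lemma vpart_s_plus_i [simp]: "vpart (s x + i u) = u"
  using i_vpart[of "s x + i u"] by simp

lemma linear_vpart: "Vector_Spaces.linear sH sV vpart"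
proof -
  have "vector_space sV"
    using rep unfolding com_prelie_rep_def by simp
  moreover have "vpart (a + b) = vpart a + vpart b" for a b
    by (simp flip: i_eq_iff add: i_vpart linear_ops[OF linear_i] linear_ops[OF linear_j]
        linear_ops[OF linear_s])
  moreover have "vpart (sH c a) = sV c (vpart a)" for c a
    by (simp flip: i_eq_iff add: i_vpart linear_ops[OF linear_i] linear_ops[OF linear_j]
        linear_ops[OF linear_s] module.scale_right_diff_distrib[OF vector_space_H[folded module_iff_vector_space]])
  ultimately show ?thesis
    using vector_space_H unfolding Vector_Spaces.linear_iff by blast
qed

lemma mulH_s_plus_i:
  "mulH (s x + i u) (s y + i v) = s (mul x y) + i (\<phi> x y + \<mu> x v + \<mu> y u)"
  by (simp add: linear_ops[OF linear_mulH(1)] linear_ops[OF linear_mulH(2)] linear_ops[OF linear_i]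
      i_phi)

lemma dotH_s_plus_i:
  "dotH (s x + i u) (s y + i v) = s (dot x y) + i (\<psi> x y + l x v + r y u)"
  by (simp add: linear_ops[OF linear_dotH(1)] linear_ops[OF linear_dotH(2)] linear_ops[OF linear_i]
      i_psi)

definition lift :: "('v \<Rightarrow> 'v) \<Rightarrow> ('a \<Rightarrow> 'a) \<Rightarrow> ('a \<Rightarrow> 'v) \<Rightarrow> 'h \<Rightarrow> 'h" where
  "lift \<beta> \<alpha> \<theta> h = s (\<alpha> (j h)) + i (\<beta> (vpart h) + \<theta> (j h))"

lemma lift_s_plus_i: "lift \<beta> \<alpha> \<theta> (s x + i u) = s (\<alpha> x) + i (\<beta> u + \<theta> x)"
  by (simp add: lift_def)

lemma j_lift: "j (lift \<beta> \<alpha> \<theta> h) = \<alpha> (j h)"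
  by (simp add: lift_def)

lemma lift_s:
  assumes "Vector_Spaces.linear sV sV \<beta>"
  shows "lift \<beta> \<alpha> \<theta> (s x) = s (\<alpha> x) + i (\<theta> x)"
  using lift_s_plus_i[of \<beta> \<alpha> \<theta> x 0] by (simp add: linear_ops[OF linear_i] linear_ops[OF assms])

lemma lift_i:
  assumes "Vector_Spaces.linear sA sA \<alpha>" and "Vector_Spaces.linear sA sV \<theta>"
  shows "lift \<beta> \<alpha> \<theta> (i u) = i (\<beta> u)"
  using lift_s_plus_i[of \<beta> \<alpha> \<theta> 0 u]
  by (simp add: linear_ops[OF linear_s] linear_ops[OF assms(1)] linear_ops[OF assms(2)])

lemma linear_lift:
  assumes "Vector_Spaces.linear sV sV \<beta>" and "Vector_Spaces.linear sA sA \<alpha>"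
    and "Vector_Spaces.linear sA sV \<theta>"
  shows "Vector_Spaces.linear sH sH (lift \<beta> \<alpha> \<theta>)"
proof -
  note lin = linear_ops[OF linear_j] linear_ops[OF linear_s] linear_ops[OF linear_i]
    linear_ops[OF linear_vpart] linear_ops[OF assms(1)] linear_ops[OF assms(2)]
    linear_ops[OF assms(3)]
  have "lift \<beta> \<alpha> \<theta> (a + b) = lift \<beta> \<alpha> \<theta> a + lift \<beta> \<alpha> \<theta> b" for a b
    by (simp add: lift_def lin algebra_simps)
  moreover have "lift \<beta> \<alpha> \<theta> (sH c a) = sH c (lift \<beta> \<alpha> \<theta> a)" for c a
    by (simp add: lift_def lin module.scale_right_distrib[OF vector_space_H[folded module_iff_vector_space]])
  ultimately show ?thesis
    using vector_space_H unfolding Vector_Spaces.linear_iff by blast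
qed

lemma bij_lift:
  assumes "bij \<beta>" and "bij \<alpha>"
  shows "bij (lift \<beta> \<alpha> \<theta>)"
proof (rule bijI)
  show "inj (lift \<beta> \<alpha> \<theta>)"
  proof (rule injI)
    fix a b
    assume eq: "lift \<beta> \<alpha> \<theta> a = lift \<beta> \<alpha> \<theta> b"
    then have "\<alpha> (j a) = \<alpha> (j b)"
      by (metis j_lift)
    then have j_eq: "j a = j b"
      using assms(2) by (simp add: bij_is_inj inj_eq)
    then have "\<beta> (vpart a) = \<beta> (vpart b)"
      using eq by (simp add: lift_def)
    then have "vpart a = vpart b"
      using assms(1) by (simp add: bij_is_inj inj_eq)
    then show "a = b"
      using j_eq decompose by metis
  qed
  show "surj (lift \<beta> \<alpha> \<theta>)"
  proof (rule surjI)
    fix h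
    show "lift \<beta> \<alpha> \<theta> (s (inv \<alpha> (j h)) + i (inv \<beta> (vpart h - \<theta> (inv \<alpha> (j h))))) = h"
      using assms by (simp add: lift_s_plus_i bij_is_surj surj_f_inv_f decompose)
  qed
qed

lemma lift_image_range:
  assumes "bij \<beta>" and "Vector_Spaces.linear sA sA \<alpha>" and "Vector_Spaces.linear sA sV \<theta>"
  shows "lift \<beta> \<alpha> \<theta> ` range i = range i"
proof -
  have "lift \<beta> \<alpha> \<theta> ` range i = range (i \<circ> \<beta>)"
    by (auto simp: image_comp lift_i[OF assms(2,3)])
  also have "\<dots> = range i"
    using assms(1) by (metis bij_is_surj image_comp)
  finally show ?thesis .
qed

lemma eq_lift:
  assumes "Vector_Spaces.linear sH sH g" and "\<And>u. g (i u) = i (\<beta> u)"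
    and "\<And>x. j (g (s x)) = \<alpha> x"
  shows "g = lift \<beta> \<alpha> (vpart \<circ> g \<circ> s)"
proof
  fix h
  have "g h = g (s (j h)) + i (\<beta> (vpart h))"
    using linear_ops(1)[OF assms(1), of "s (j h)" "i (vpart h)"] by (simp add: decompose assms(2))
  also have "\<dots> = s (j (g (s (j h)))) + i (vpart (g (s (j h)))) + i (\<beta> (vpart h))"
    by (simp only: decompose)
  also have "\<dots> = lift \<beta> \<alpha> (vpart \<circ> g \<circ> s) h"
    by (simp add: lift_def assms(3) linear_ops(1)[OF linear_i] algebra_simps)
  finally show "g h = lift \<beta> \<alpha> (vpart \<circ> g \<circ> s) h" .
qed

lemma lift_mulH_iff:
  assumes \<beta>: "Vector_Spaces.linear sV sV \<beta>" and \<alpha>: "Vector_Spaces.linear sA sA \<alpha>"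
    and \<theta>: "Vector_Spaces.linear sA sV \<theta>" and \<alpha>_mul: "\<And>x y. \<alpha> (mul x y) = mul (\<alpha> x) (\<alpha> y)"
  shows "(\<forall>a b. lift \<beta> \<alpha> \<theta> (mulH a b) = mulH (lift \<beta> \<alpha> \<theta> a) (lift \<beta> \<alpha> \<theta> b)) \<longleftrightarrow>
    (\<forall>x u. \<beta> (\<mu> x u) = \<mu> (\<alpha> x) (\<beta> u)) \<and>
    (\<forall>x y. \<beta> (\<phi> x y) = \<phi> (\<alpha> x) (\<alpha> y) + \<mu> (\<alpha> x) (\<theta> y) + \<mu> (\<alpha> y) (\<theta> x) - \<theta> (mul x y))"
    (is "?hom \<longleftrightarrow> ?compat \<and> ?coboundary")
proof -
  note lin = linear_ops[OF \<beta>] linear_ops[OF linear_i] linear_ops[OF linear_action(1)]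
  have lift_mulH: "lift \<beta> \<alpha> \<theta> (mulH (s x + i u) (s y + i v)) =
      s (\<alpha> (mul x y)) + i (\<beta> (\<phi> x y) + \<beta> (\<mu> x v) + \<beta> (\<mu> y u) + \<theta> (mul x y))" for x y u v
    by (simp only: mulH_s_plus_i lift_s_plus_i) (simp add: lin)
  have mulH_lift: "mulH (lift \<beta> \<alpha> \<theta> (s x + i u)) (lift \<beta> \<alpha> \<theta> (s y + i v)) =
      s (\<alpha> (mul x y)) + i (\<phi> (\<alpha> x) (\<alpha> y) + \<mu> (\<alpha> x) (\<beta> v) + \<mu> (\<alpha> x) (\<theta> y)
        + \<mu> (\<alpha> y) (\<beta> u) + \<mu> (\<alpha> y) (\<theta> x))" for x y u v
    by (simp only: lift_s_plus_i mulH_s_plus_i) (simp add: \<alpha>_mul lin add.assoc)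
  show ?thesis
  proof
    assume hom: ?hom
    have "i (\<beta> (\<mu> x u)) = i (\<mu> (\<alpha> x) (\<beta> u))" for x u
    proof -
      have "i (\<beta> (\<mu> x u)) = lift \<beta> \<alpha> \<theta> (mulH (s x) (i u))"
        by (simp add: lift_i[OF \<alpha> \<theta>])
      also have "\<dots> = mulH (s (\<alpha> x) + i (\<theta> x)) (i (\<beta> u))"
        using hom by (simp only: lift_i[OF \<alpha> \<theta>] lift_s[OF \<beta>])
      finally show ?thesis
        by (simp add: linear_ops[OF linear_mulH(2)])
    qed
    then have ?compat
      by simp
    moreover have "lift \<beta> \<alpha> \<theta> (mulH (s x + i 0) (s y + i 0)) = mulH (lift \<beta> \<alpha> \<theta> (s x + i 0)) (lift \<beta> \<alpha> \<theta> (s y + i 0))"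
      for x y using hom by blast
    then have "?coboundary"
      unfolding lift_mulH mulH_lift
      by (simp add: linear_ops[OF \<beta>] linear_ops[OF linear_action(1)] algebra_simps)
    ultimately show "?compat \<and> ?coboundary" ..
  next
    assume "?compat \<and> ?coboundary"
    then have "lift \<beta> \<alpha> \<theta> (mulH (s x + i u) (s y + i v)) = mulH (lift \<beta> \<alpha> \<theta> (s x + i u)) (lift \<beta> \<alpha> \<theta> (s y + i v))"
      for x y u v unfolding lift_mulH mulH_lift by (simp add: algebra_simps)
    then show ?hom
      by (metis decompose)
  qed
qed

lemma lift_dotH_iff:
  assumes \<beta>: "Vector_Spaces.linear sV sV \<beta>" and \<alpha>: "Vector_Spaces.linear sA sA \<alpha>"
    and \<theta>: "Vector_Spaces.linear sA sV \<theta>" and \<alpha>_dot: "\<And>x y. \<alpha> (dot x y) = dot (\<alpha> x) (\<alpha> y)"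
  shows "(\<forall>a b. lift \<beta> \<alpha> \<theta> (dotH a b) = dotH (lift \<beta> \<alpha> \<theta> a) (lift \<beta> \<alpha> \<theta> b)) \<longleftrightarrow>
    (\<forall>x u. \<beta> (l x u) = l (\<alpha> x) (\<beta> u) \<and> \<beta> (r x u) = r (\<alpha> x) (\<beta> u)) \<and>
    (\<forall>x y. \<beta> (\<psi> x y) = \<psi> (\<alpha> x) (\<alpha> y) + l (\<alpha> x) (\<theta> y) + r (\<alpha> y) (\<theta> x) - \<theta> (dot x y))"
    (is "?hom \<longleftrightarrow> ?compat \<and> ?coboundary")
proof -
  note lin = linear_ops[OF \<beta>] linear_ops[OF linear_i] linear_ops[OF linear_action(2)]
    linear_ops[OF linear_action(3)]
  have lift_dotH: "lift \<beta> \<alpha> \<theta> (dotH (s x + i u) (s y + i v)) =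
      s (\<alpha> (dot x y)) + i (\<beta> (\<psi> x y) + \<beta> (l x v) + \<beta> (r y u) + \<theta> (dot x y))" for x y u v
    by (simp only: dotH_s_plus_i lift_s_plus_i) (simp add: lin)
  have dotH_lift: "dotH (lift \<beta> \<alpha> \<theta> (s x + i u)) (lift \<beta> \<alpha> \<theta> (s y + i v)) =
      s (\<alpha> (dot x y)) + i (\<psi> (\<alpha> x) (\<alpha> y) + l (\<alpha> x) (\<beta> v) + l (\<alpha> x) (\<theta> y)
        + r (\<alpha> y) (\<beta> u) + r (\<alpha> y) (\<theta> x))" for x y u v
    by (simp only: lift_s_plus_i dotH_s_plus_i) (simp add: \<alpha>_dot lin add.assoc)
  show ?thesis
  proof
    assume hom: ?hom
    have "i (\<beta> (l x u)) = i (l (\<alpha> x) (\<beta> u))" for x u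
    proof -
      have "i (\<beta> (l x u)) = lift \<beta> \<alpha> \<theta> (dotH (s x) (i u))"
        by (simp add: lift_i[OF \<alpha> \<theta>])
      also have "\<dots> = dotH (s (\<alpha> x) + i (\<theta> x)) (i (\<beta> u))"
        using hom by (simp only: lift_i[OF \<alpha> \<theta>] lift_s[OF \<beta>])
      finally show ?thesis
        by (simp add: linear_ops[OF linear_dotH(2)])
    qed
    moreover have "i (\<beta> (r x u)) = i (r (\<alpha> x) (\<beta> u))" for x u
    proof -
      have "i (\<beta> (r x u)) = lift \<beta> \<alpha> \<theta> (dotH (i u) (s x))"
        by (simp add: lift_i[OF \<alpha> \<theta>])
      also have "\<dots> = dotH (i (\<beta> u)) (s (\<alpha> x) + i (\<theta> x))"
        using hom by (simp only: lift_i[OF \<alpha> \<theta>] lift_s[OF \<beta>])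
      finally show ?thesis
        by (simp add: linear_ops[OF linear_dotH(1)])
    qed
    ultimately have ?compat
      by simp
    moreover have "lift \<beta> \<alpha> \<theta> (dotH (s x + i 0) (s y + i 0)) = dotH (lift \<beta> \<alpha> \<theta> (s x + i 0)) (lift \<beta> \<alpha> \<theta> (s y + i 0))"
      for x y using hom by blast
    then have "?coboundary"
      unfolding lift_dotH dotH_lift
      by (simp add: linear_ops[OF \<beta>] linear_ops[OF linear_action(2)] linear_ops[OF linear_action(3)]
          algebra_simps)
    ultimately show "?compat \<and> ?coboundary" ..
  next
    assume "?compat \<and> ?coboundary"
    then have "lift \<beta> \<alpha> \<theta> (dotH (s x + i u) (s y + i v)) = dotH (lift \<beta> \<alpha> \<theta> (s x + i u)) (lift \<beta> \<alpha> \<theta> (s y + i v))"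
      for x y u v unfolding lift_dotH dotH_lift by (simp add: algebra_simps)
    then show ?hom
      by (metis decompose)
  qed
qed

lemma inducible_iff_lift:
  assumes "linear_aut sV \<beta>" and "com_prelie_aut sA mul dot \<alpha>"
  shows "inducible sH mulH dotH i j s \<beta> \<alpha> \<longleftrightarrow>
    (\<exists>\<theta>. Vector_Spaces.linear sA sV \<theta> \<and>
      (\<forall>a b. lift \<beta> \<alpha> \<theta> (mulH a b) = mulH (lift \<beta> \<alpha> \<theta> a) (lift \<beta> \<alpha> \<theta> b)) \<and>
      (\<forall>a b. lift \<beta> \<alpha> \<theta> (dotH a b) = dotH (lift \<beta> \<alpha> \<theta> a) (lift \<beta> \<alpha> \<theta> b)))"
proof
  assume "inducible sH mulH dotH i j s \<beta> \<alpha>"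
  then obtain g where g: "com_prelie_hom sH mulH dotH sH mulH dotH g"
    and g_i: "\<And>u. g (i u) = i (\<beta> u)" and g_s: "\<And>x. j (g (s x)) = \<alpha> x"
    unfolding inducible_def aut_V_def com_prelie_aut_def by blast
  then have g_lin: "Vector_Spaces.linear sH sH g"
    unfolding com_prelie_hom_def by blast
  have "Vector_Spaces.linear sA sV (vpart \<circ> g \<circ> s)"
    by (rule Vector_Spaces.linear_compose[OF linear_s Vector_Spaces.linear_compose[OF g_lin linear_vpart]])
  with g eq_lift[OF g_lin g_i g_s] show "\<exists>\<theta>. Vector_Spaces.linear sA sV \<theta> \<and>
      (\<forall>a b. lift \<beta> \<alpha> \<theta> (mulH a b) = mulH (lift \<beta> \<alpha> \<theta> a) (lift \<beta> \<alpha> \<theta> b)) \<and>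
      (\<forall>a b. lift \<beta> \<alpha> \<theta> (dotH a b) = dotH (lift \<beta> \<alpha> \<theta> a) (lift \<beta> \<alpha> \<theta> b))"
    unfolding com_prelie_hom_def by metis
next
  have \<beta>: "Vector_Spaces.linear sV sV \<beta>" "bij \<beta>" and \<alpha>: "Vector_Spaces.linear sA sA \<alpha>" "bij \<alpha>"
    using assms unfolding linear_aut_def com_prelie_aut_def com_prelie_hom_def by auto
  assume "\<exists>\<theta>. Vector_Spaces.linear sA sV \<theta> \<and>
      (\<forall>a b. lift \<beta> \<alpha> \<theta> (mulH a b) = mulH (lift \<beta> \<alpha> \<theta> a) (lift \<beta> \<alpha> \<theta> b)) \<and>
      (\<forall>a b. lift \<beta> \<alpha> \<theta> (dotH a b) = dotH (lift \<beta> \<alpha> \<theta> a) (lift \<beta> \<alpha> \<theta> b))"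
  then obtain \<theta> where \<theta>: "Vector_Spaces.linear sA sV \<theta>"
    and hom: "\<forall>a b. lift \<beta> \<alpha> \<theta> (mulH a b) = mulH (lift \<beta> \<alpha> \<theta> a) (lift \<beta> \<alpha> \<theta> b)"
      "\<forall>a b. lift \<beta> \<alpha> \<theta> (dotH a b) = dotH (lift \<beta> \<alpha> \<theta> a) (lift \<beta> \<alpha> \<theta> b)"
    by blast
  have "aut_V sH mulH dotH i (lift \<beta> \<alpha> \<theta>)"
    unfolding aut_V_def com_prelie_aut_def com_prelie_hom_def
    using linear_lift[OF \<beta>(1) \<alpha>(1) \<theta>] hom bij_lift[OF \<beta>(2) \<alpha>(2)] lift_image_range[OF \<beta>(2) \<alpha>(1) \<theta>]
    by blast
  then show "inducible sH mulH dotH i j s \<beta> \<alpha>"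
    unfolding inducible_def using lift_i[OF \<alpha>(1) \<theta>] j_lift by auto
qed

end

theorem theorem4p2:
  fixes sA :: "'k::field_char_0 \<Rightarrow> 'a::ab_group_add \<Rightarrow> 'a"
    and mul dot :: "'a \<Rightarrow> 'a \<Rightarrow> 'a"
    and sV :: "'k \<Rightarrow> 'v::ab_group_add \<Rightarrow> 'v"
    and \<mu> l r :: "'a \<Rightarrow> 'v \<Rightarrow> 'v"
    and sH :: "'k \<Rightarrow> 'h::ab_group_add \<Rightarrow> 'h"
    and mulH dotH :: "'h \<Rightarrow> 'h \<Rightarrow> 'h"
    and i :: "'v \<Rightarrow> 'h" and j :: "'h \<Rightarrow> 'a" and s :: "'a \<Rightarrow> 'h"
    and \<beta> :: "'v \<Rightarrow> 'v" and \<alpha> :: "'a \<Rightarrow> 'a"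
  assumes "com_prelie sA mul dot"
    and "com_prelie_rep sA mul dot sV \<mu> l r"
    and "abelian_extension sA mul dot sV sH mulH dotH i j"
    and "induces_rep sA sH mulH dotH i j \<mu> l r"
    and "linear_section sA sH j s"
    and "linear_aut sV \<beta>"
    and "com_prelie_aut sA mul dot \<alpha>"
  shows "inducible sH mulH dotH i j s \<beta> \<alpha> \<longleftrightarrow>
           compat_pairs \<mu> l r \<beta> \<alpha> \<and>
           cohomologous sA mul dot sV \<mu> l r
             (twist \<beta> \<alpha> (cocycle_phi mulH mul i s)) (twist \<beta> \<alpha> (cocycle_psi dotH dot i s))
             (cocycle_phi mulH mul i s) (cocycle_psi dotH dot i s)"
proof -
  interpret abelian_extension_with_section sA mul dot sV \<mu> l r sH mulH dotH i j s
    using assms(2-5) by unfold_locales \<comment> \<open>assms(1) is also part of the extension hypothesis\<close>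
  have \<beta>: "Vector_Spaces.linear sV sV \<beta>" and \<alpha>: "Vector_Spaces.linear sA sA \<alpha>"
    and \<alpha>_mul: "\<And>x y. \<alpha> (mul x y) = mul (\<alpha> x) (\<alpha> y)"
    and \<alpha>_dot: "\<And>x y. \<alpha> (dot x y) = dot (\<alpha> x) (\<alpha> y)"
    using assms(6,7) unfolding linear_aut_def com_prelie_aut_def com_prelie_hom_def by auto
  show ?thesis
    unfolding inducible_iff_lift[OF assms(6,7)] cohomologous_twist_iff[OF assms(7)] compat_pairs_def
    by (simp only: lift_mulH_iff[OF \<beta> \<alpha> _ \<alpha>_mul] lift_dotH_iff[OF \<beta> \<alpha> _ \<alpha>_dot] cong: conj_cong)
      blast
qed

end
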